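(* Let $k\in\mathbb{N}$, $P$ the uniform distribution on $[0,1]$, $\beta=\{\frac jk:1\leq j\leq k\}$, and $J_{k,j}=[\frac{j-1}k,\frac jk]$ for $1\leq j\leq k$. Let $n\geq k$, let $\alpha_n$ be a conditional optimal set of $n$-points for $P$ with respect to $\beta$, and put $n_j=\mathrm{card}(\alpha_n\cap J_{k,j})$. Then for $2\leq i<j\leq k$, $|n_i-n_j|\in\{0,1\}$.
   Context: For a Borel probability measure $P$ on $\mathbb{R}$ and finite $\beta$ with $\mathrm{card}(\beta)=r$, for $n\ge r$, $V_n=\inf\{\int\min_{a\in\alpha\cup\beta}(x-a)^2dP(x):\mathrm{card}(\alpha)\le n-r\}$; a set $\alpha\cup\beta$ attaining the infimum, with each point of $\beta$ having a Voronoi region of positive $P$-measure, is a conditional optimal set of $n$-points with respect to $\beta$ (it contains $\beta$). *)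

theory Defs
  imports "HOL-Analysis.Analysis"
begin

definition distortion :: "real measure \<Rightarrow> real set \<Rightarrow> real" where
  "distortion P \<gamma> = (\<integral>x. Min ((\<lambda>a. (x - a)\<^sup>2) ` \<gamma>) \<partial>P)"

definition cond_quant_error :: "real measure \<Rightarrow> real set \<Rightarrow> nat \<Rightarrow> real" where
  "cond_quant_error P \<beta> n =
     Inf {distortion P (\<alpha> \<union> \<beta>) | \<alpha>. finite \<alpha> \<and> card \<alpha> \<le> n - card \<beta>}"

definition voronoi_region :: "real set \<Rightarrow> real \<Rightarrow> real set" where
  "voronoi_region \<gamma> b = {x. \<forall>a\<in>\<gamma>. \<bar>x - b\<bar> \<le> \<bar>x - a\<bar>}"

definition cond_optimal_set :: "real measure \<Rightarrow> real set \<Rightarrow> nat \<Rightarrow> real set \<Rightarrow> bool" where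
  "cond_optimal_set P \<beta> n \<gamma> \<longleftrightarrow>
     finite \<beta> \<and> card \<beta> \<le> n \<and>
     (\<exists>\<alpha>. finite \<alpha> \<and> card \<alpha> \<le> n - card \<beta> \<and> \<gamma> = \<alpha> \<union> \<beta>) \<and>
     distortion P \<gamma> = cond_quant_error P \<beta> n \<and>
     (\<forall>b\<in>\<beta>. measure P (voronoi_region \<gamma> b) > 0)"

end

theory Submission
  imports Defs
begin

text \<open>Every point of \<beta> belongs to the optimal set, so for 2 \<le> l \<le> k both endpoints of
  J_l lie in \<alpha>n and the cells decouple: the error on J_l only depends on the m_l points of
  \<alpha>n strictly inside J_l. It is at least L^3 / (12 (m_l + 1)^2), L = 1/k, with equality for
  equally spaced points. If m_i \<ge> m_j + 2, replacing the inner points by m_i - 1 equally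
  spaced points in J_i and m_j + 1 in J_j keeps the number of points and, by strict convexity
  of m \<mapsto> 1 / (m + 1)^2, strictly lowers the error, contradicting optimality.\<close>

definition min_sq_dist :: "real set \<Rightarrow> real \<Rightarrow> real" where
  "min_sq_dist S x = Min ((\<lambda>a. (x - a)\<^sup>2) ` S)"

lemma min_sq_dist_le: "finite S \<Longrightarrow> s \<in> S \<Longrightarrow> min_sq_dist S x \<le> (x - s)\<^sup>2"
  unfolding min_sq_dist_def by (rule Min_le) auto

lemma min_sq_dist_le_if_closer:
  assumes "finite S" "S \<noteq> {}" "finite T" "\<And>s. s \<in> S \<Longrightarrow> \<exists>t\<in>T. \<bar>x - t\<bar> \<le> \<bar>x - s\<bar>"
  shows "min_sq_dist T x \<le> min_sq_dist S x"
proof -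
  have "min_sq_dist S x \<in> (\<lambda>a. (x - a)\<^sup>2) ` S"
    unfolding min_sq_dist_def using assms(1,2) by (intro Min_in) auto
  then obtain s where s: "s \<in> S" "min_sq_dist S x = (x - s)\<^sup>2" by auto
  then obtain t where "t \<in> T" "\<bar>x - t\<bar> \<le> \<bar>x - s\<bar>" using assms(4) by blast
  then have "min_sq_dist T x \<le> (x - t)\<^sup>2" "(x - t)\<^sup>2 \<le> (x - s)\<^sup>2"
    using assms(3) by (auto simp: min_sq_dist_le abs_le_square_iff)
  then show ?thesis using s by linarith
qed

lemma min_sq_dist_antimono:
  "finite S \<Longrightarrow> T \<subseteq> S \<Longrightarrow> T \<noteq> {} \<Longrightarrow> min_sq_dist S x \<le> min_sq_dist T x"
  by (rule min_sq_dist_le_if_closer) (auto intro: finite_subset)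

lemma min_sq_dist_pair: "min_sq_dist {a, b} x = min ((x - a)\<^sup>2) ((x - b)\<^sup>2)"
  by (simp add: min_sq_dist_def)

lemma continuous_on_min_sq_dist: "finite S \<Longrightarrow> S \<noteq> {} \<Longrightarrow> continuous_on A (min_sq_dist S)"
proof (induction S rule: finite_ne_induct)
  case (singleton x)
  then show ?case by (auto simp: min_sq_dist_def intro!: continuous_intros)
next
  case (insert x F)
  have "min_sq_dist (insert x F) = (\<lambda>y. min ((y - x)\<^sup>2) (min_sq_dist F y))"
    using insert by (auto simp: min_sq_dist_def fun_eq_iff)
  then show ?case using insert by (auto intro!: continuous_intros)
qed

lemma integrable_min_sq_dist: "finite S \<Longrightarrow> S \<noteq> {} \<Longrightarrow> min_sq_dist S integrable_on {a..b}"
  by (intro integrable_continuous_interval continuous_on_min_sq_dist)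

lemma min_sq_dist_remove_gap:
  assumes "finite S" "a \<in> S" "b \<in> S" "x \<notin> {a<..<b}"
  shows "min_sq_dist (S - {a<..<b}) x = min_sq_dist S x"
proof (rule antisym)
  show "min_sq_dist (S - {a<..<b}) x \<le> min_sq_dist S x"
  proof (rule min_sq_dist_le_if_closer)
    fix s assume "s \<in> S"
    show "\<exists>t\<in>S - {a<..<b}. \<bar>x - t\<bar> \<le> \<bar>x - s\<bar>"
    proof (cases "s \<in> {a<..<b}")
      case s: True
      show ?thesis
      proof (cases "x \<le> a")
        case True
        then show ?thesis using assms(2) s by (intro bexI[of _ a]) auto
      next
        case False
        then have "b \<le> x" using assms(4) by auto
        then show ?thesis using assms(3) s by (intro bexI[of _ b]) auto
      qed
    qed (use \<open>s \<in> S\<close> in auto)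
  qed (use assms in auto)
  show "min_sq_dist S x \<le> min_sq_dist (S - {a<..<b}) x"
    by (rule min_sq_dist_antimono) (use assms in auto)
qed

lemma integral_uniform_measure:
  fixes f :: "real \<Rightarrow> real"
  assumes "a < b" "f \<in> borel_measurable lborel" "continuous_on {a..b} f"
  shows "integral\<^sup>L (uniform_measure lborel {a..b}) f = integral {a..b} f / (b - a)"
proof -
  have "uniform_measure lborel {a..b} = density lborel (\<lambda>x. ennreal (indicator {a..b} x / (b - a)))"
    unfolding uniform_measure_def using assms(1)
    by (intro density_cong) (auto simp: indicator_def divide_ennreal[symmetric])
  then have "integral\<^sup>L (uniform_measure lborel {a..b}) f
      = integral\<^sup>L lborel (\<lambda>x. (indicator {a..b} x / (b - a)) *\<^sub>R f x)"
    using assms(1) by (simp only:) (rule integral_density[OF assms(2)], auto)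
  also have "\<dots> = (LBINT x. indicator {a..b} x * f x) / (b - a)"
    by simp
  also have "\<dots> = (LINT x : {a..b} | lborel. f x) / (b - a)"
    by (simp add: set_lebesgue_integral_def)
  also have "\<dots> = integral {a..b} f / (b - a)"
    using set_borel_integral_eq_integral(2)[OF borel_integrable_atLeastAtMost'[OF assms(3)]] by simp
  finally show ?thesis .
qed

lemma distortion_nonneg: "finite S \<Longrightarrow> S \<noteq> {} \<Longrightarrow> 0 \<le> distortion P S"
  unfolding distortion_def by (rule Bochner_Integration.integral_nonneg) (simp add: Min_ge_iff)

lemma distortion_uniform_measure:
  assumes "finite S" "S \<noteq> {}" "c < d"
  shows "distortion (uniform_measure lborel {c..d}) S = integral {c..d} (min_sq_dist S) / (d - c)"
proof -
  have "(\<lambda>x. Min ((\<lambda>a. (x - a)\<^sup>2) ` S)) = min_sq_dist S"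
    by (simp add: min_sq_dist_def fun_eq_iff)
  moreover have "min_sq_dist S \<in> borel_measurable lborel"
    using continuous_on_min_sq_dist[OF assms(1,2)] by (simp add: borel_measurable_continuous_onI)
  ultimately show ?thesis
    unfolding distortion_def using assms continuous_on_min_sq_dist
    by (simp add: integral_uniform_measure)
qed

lemma has_integral_power2_shift:
  fixes a b c :: real
  assumes "a \<le> b"
  shows "((\<lambda>x. (x - c)\<^sup>2) has_integral ((b - c)^3 - (a - c)^3) / 3) {a..b}"
proof -
  have "((\<lambda>x. (x - c)\<^sup>2) has_integral ((\<lambda>x. (x - c)^3 / 3) b - (\<lambda>x. (x - c)^3 / 3) a)) {a..b}"
    by (rule fundamental_theorem_of_calculus[OF assms])
      (auto intro!: derivative_eq_intros
        simp: has_real_derivative_iff_has_vector_derivative[symmetric] power2_eq_square)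
  then show ?thesis by (simp add: diff_divide_distrib)
qed

lemma has_integral_min_sq_dist_pair:
  fixes a b :: real
  assumes "a \<le> b"
  shows "(min_sq_dist {a, b} has_integral (b - a)^3 / 12) {a..b}"
proof -
  define c where "c = (a + b) / 2"
  have ac: "a \<le> c" "c \<le> b" using assms by (auto simp: c_def)
  have left: "(min_sq_dist {a, b} has_integral ((c - a)^3 - (a - a)^3) / 3) {a..c}"
  proof (rule has_integral_eq[OF _ has_integral_power2_shift[OF ac(1)]])
    fix x assume "x \<in> {a..c}"
    then have "(x - a)\<^sup>2 \<le> (x - b)\<^sup>2" by (auto simp: c_def abs_le_square_iff[symmetric])
    then show "(x - a)\<^sup>2 = min_sq_dist {a, b} x" by (simp add: min_sq_dist_pair)
  qed
  have right: "(min_sq_dist {a, b} has_integral ((b - b)^3 - (c - b)^3) / 3) {c..b}"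
  proof (rule has_integral_eq[OF _ has_integral_power2_shift[OF ac(2)]])
    fix x assume "x \<in> {c..b}"
    then have "(x - b)\<^sup>2 \<le> (x - a)\<^sup>2" by (auto simp: c_def abs_le_square_iff[symmetric])
    then show "(x - b)\<^sup>2 = min_sq_dist {a, b} x" by (simp add: min_sq_dist_pair)
  qed
  have "((c - a)^3 - (a - a)^3) / 3 + ((b - b)^3 - (c - b)^3) / 3 = (b - a)^3 / 12"
    by (simp add: c_def field_simps power3_eq_cube)
  then show ?thesis using has_integral_combine[OF ac left right] by metis
qed

lemma integral_min_sq_dist_empty_gap:
  assumes "finite S" "a \<le> b" "a \<in> S" "b \<in> S" "S \<inter> {a<..<b} = {}"
  shows "(b - a)^3 / 12 \<le> integral {a..b} (min_sq_dist S)"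
proof -
  have "integral {a..b} (min_sq_dist {a, b}) \<le> integral {a..b} (min_sq_dist S)"
  proof (rule integral_le)
    fix x assume x: "x \<in> {a..b}"
    show "min_sq_dist {a, b} x \<le> min_sq_dist S x"
    proof (rule min_sq_dist_le_if_closer)
      fix s assume "s \<in> S"
      then have "s \<le> a \<or> b \<le> s" using assms(5) by force
      then show "\<exists>t\<in>{a, b}. \<bar>x - t\<bar> \<le> \<bar>x - s\<bar>" using x by auto
    qed (use assms in auto)
  qed (use has_integral_min_sq_dist_pair[OF assms(2)] integrable_min_sq_dist assms in auto)
  then show ?thesis using has_integral_min_sq_dist_pair[OF assms(2)] by (simp add: integral_unique)
qed

text \<open>For fixed u + v the right-hand side is minimal at v = q u, which is why the bound
  L^3 / (12 (m + 1)^2) for m interior points propagates by induction on m.\<close>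
lemma cube_sum_div_square_le:
  fixes u v q :: real
  assumes "u \<ge> 0" "v \<ge> 0" "q \<ge> 1"
  shows "(u + v)^3 / (q + 1)^2 \<le> u^3 + v^3 / q^2"
proof -
  define t where "t = v / q"
  have v: "v = q * t" and "t \<ge> 0" using assms by (auto simp: t_def)
  have "(q + 1)^2 * (u^3 + q * t^3) - (u + q * t)^3
      = q * (q * ((u - t)^2 * (u + 2 * t)) + (u - t)^2 * (2 * u + t))"
    by (simp add: algebra_simps power2_eq_square power3_eq_cube)
  also have "\<dots> \<ge> 0"
    using assms \<open>t \<ge> 0\<close> by (intro mult_nonneg_nonneg add_nonneg_nonneg) auto
  finally have "(u + q * t)^3 / (q + 1)^2 \<le> u^3 + q * t^3"
    using assms by (simp add: divide_le_eq mult.commute)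
  moreover have "q * t^3 = v^3 / q^2"
    using assms unfolding v by (simp add: power2_eq_square power3_eq_cube)
  ultimately show ?thesis unfolding v by simp
qed

lemma integral_min_sq_dist_lower:
  assumes "finite S" "a \<le> b" "a \<in> S" "b \<in> S"
  shows "(b - a)^3 / (12 * (real (card (S \<inter> {a<..<b})) + 1)^2) \<le> integral {a..b} (min_sq_dist S)"
  using assms(2,3)
proof (induction "card (S \<inter> {a<..<b})" arbitrary: a)
  case 0
  then have "S \<inter> {a<..<b} = {}" using assms(1) by simp
  then show ?case using integral_min_sq_dist_empty_gap[OF assms(1) 0(2,3) assms(4)] 0(1) by simp
next
  case (Suc m)
  define c where "c = Min (S \<inter> {a<..<b})"
  have fin: "finite (S \<inter> {a<..<b})" using assms(1) by simp
  then have "c \<in> S \<inter> {a<..<b}" unfolding c_def using Suc(2) by (intro Min_in) auto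
  then have c: "c \<in> S" "a < c" "c < b" by auto
  have left_gap: "S \<inter> {a<..<c} = {}"
    using Min_le[OF fin] c unfolding c_def by fastforce
  have "S \<inter> {c<..<b} = (S \<inter> {a<..<b}) - {c}"
    using Min_le[OF fin] c unfolding c_def by fastforce
  then have m: "card (S \<inter> {c<..<b}) = m"
    using Suc(2) \<open>c \<in> S \<inter> {a<..<b}\<close> fin by simp
  have "((c - a) + (b - c))^3 / ((real m + 1) + 1)^2 \<le> (c - a)^3 + (b - c)^3 / (real m + 1)^2"
    by (rule cube_sum_div_square_le) (use c in auto)
  then have "(b - a)^3 / (12 * (real (Suc m) + 1)^2)
      \<le> (c - a)^3 / 12 + (b - c)^3 / (12 * (real m + 1)^2)"
    by (simp add: add.commute add.left_commute)
  also have "\<dots> \<le> integral {a..c} (min_sq_dist S) + integral {c..b} (min_sq_dist S)"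
    using integral_min_sq_dist_empty_gap[OF assms(1) _ Suc(4) c(1) left_gap]
      Suc(1)[OF m[symmetric] _ c(1)] c
    by (intro add_mono) (auto simp: m)
  also have "\<dots> = integral {a..b} (min_sq_dist S)"
    using c Suc(4) assms(1)
    by (intro Henstock_Kurzweil_Integration.integral_combine integrable_min_sq_dist) auto
  finally show ?case using Suc(2) by simp
qed

lemma integral_min_sq_dist_equispaced_upper:
  assumes "finite S" "d \<ge> 0" "\<And>r. r \<le> N \<Longrightarrow> a + real r * d \<in> S"
  shows "integral {a..a + real N * d} (min_sq_dist S) \<le> real N * d^3 / 12"
  using assms(3)
proof (induction N)
  case 0
  then show ?case by simp
next
  case (Suc N)
  let ?t = "a + real N * d"
  have t: "?t \<in> S" "?t + d \<in> S"
    using Suc.prems[of N] Suc.prems[of "Suc N"] by (auto simp: algebra_simps)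
  have "integral {?t..?t + d} (min_sq_dist S) \<le> integral {?t..?t + d} (min_sq_dist {?t, ?t + d})"
    using t assms(1,2) has_integral_min_sq_dist_pair[of ?t "?t + d"]
    by (intro integral_le integrable_min_sq_dist min_sq_dist_antimono) auto
  also have "\<dots> = d^3 / 12"
    using has_integral_min_sq_dist_pair[of ?t "?t + d"] assms(2) by (simp add: integral_unique)
  finally have "integral {?t..?t + d} (min_sq_dist S) \<le> d^3 / 12" .
  moreover have "integral {a..?t} (min_sq_dist S) \<le> real N * d^3 / 12"
    using Suc by auto
  moreover have "integral {a..?t} (min_sq_dist S) + integral {?t..?t + d} (min_sq_dist S)
      = integral {a..?t + d} (min_sq_dist S)"
    using t assms(1,2)
    by (intro Henstock_Kurzweil_Integration.integral_combine integrable_min_sq_dist) auto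
  ultimately show ?case by (simp add: algebra_simps)
qed

lemma integral_eq_outside_subinterval:
  fixes f g :: "real \<Rightarrow> real"
  assumes "f integrable_on {c..d}" "g integrable_on {c..d}" "c \<le> a" "a \<le> b" "b \<le> d"
    and "\<And>x. x \<in> {c..d} \<Longrightarrow> x \<notin> {a<..<b} \<Longrightarrow> f x = g x"
  shows "integral {c..d} f - integral {a..b} f = integral {c..d} g - integral {a..b} g"
proof -
  have split: "integral {c..d} h = integral {c..a} h + integral {a..b} h + integral {b..d} h"
    if "h integrable_on {c..d}" for h :: "real \<Rightarrow> real"
  proof -
    have "h integrable_on {c..b}" by (rule integrable_subinterval_real[OF that]) (use assms in auto)
    then have "integral {c..b} h = integral {c..a} h + integral {a..b} h"
      using assms by (intro Henstock_Kurzweil_Integration.integral_combine[symmetric]) auto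
    moreover have "integral {c..d} h = integral {c..b} h + integral {b..d} h"
      using that assms by (intro Henstock_Kurzweil_Integration.integral_combine[symmetric]) auto
    ultimately show ?thesis by simp
  qed
  have "integral {c..a} f = integral {c..a} g" "integral {b..d} f = integral {b..d} g"
    using assms by (auto intro!: Henstock_Kurzweil_Integration.integral_cong)
  then show ?thesis using split[OF assms(1)] split[OF assms(2)] by simp
qed

definition equispaced_interior :: "real \<Rightarrow> real \<Rightarrow> nat \<Rightarrow> real set" where
  "equispaced_interior a b p = (\<lambda>r. a + real r * ((b - a) / (real p + 1))) ` {1..p}"

definition regrid :: "real set \<Rightarrow> real \<Rightarrow> real \<Rightarrow> nat \<Rightarrow> real set" where
  "regrid S a b p = (S - {a<..<b}) \<union> equispaced_interior a b p"

lemma equispaced_interior_subset: "a < b \<Longrightarrow> equispaced_interior a b p \<subseteq> {a<..<b}"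
proof
  fix y assume "a < b" "y \<in> equispaced_interior a b p"
  then obtain r where r: "1 \<le> r" "r \<le> p" "y = a + real r * ((b - a) / (real p + 1))"
    unfolding equispaced_interior_def by auto
  have "real r * ((b - a) / (real p + 1)) < (real p + 1) * ((b - a) / (real p + 1))"
    using r \<open>a < b\<close> by (intro mult_strict_right_mono) auto
  then show "y \<in> {a<..<b}" using r \<open>a < b\<close> by auto
qed

lemma card_equispaced_interior: "a < b \<Longrightarrow> card (equispaced_interior a b p) = p"
  unfolding equispaced_interior_def by (subst card_image) (auto simp: inj_on_def)

lemma equispaced_point_mem:
  assumes "r \<le> p + 1"
  shows "a + real r * ((b - a) / (real p + 1)) \<in> insert a (insert b (equispaced_interior a b p))"
proof -
  consider "r = 0" | "r = p + 1" | "r \<in> {1..p}" using assms by fastforce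
  then show ?thesis
  proof cases
    case 2
    then show ?thesis by (simp add: field_simps)
  qed (auto simp: equispaced_interior_def)
qed

lemma finite_equispaced_interior [simp]: "finite (equispaced_interior a b p)"
  by (simp add: equispaced_interior_def)

lemma finite_regrid: "finite S \<Longrightarrow> finite (regrid S a b p)"
  by (simp add: regrid_def)

lemma regrid_Diff_gap: "a < b \<Longrightarrow> regrid S a b p - {a<..<b} = S - {a<..<b}"
  using equispaced_interior_subset[of a b p] by (auto simp: regrid_def)

lemma card_regrid:
  assumes "finite S" "a < b"
  shows "card (regrid S a b p) = card S - card (S \<inter> {a<..<b}) + p"
proof -
  have "card (regrid S a b p) = card (S - {a<..<b}) + card (equispaced_interior a b p)"
    unfolding regrid_def using assms equispaced_interior_subset[OF assms(2)]
    by (intro card_Un_disjoint) auto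
  then show ?thesis
    using assms by (simp add: card_Diff_subset_Int card_equispaced_interior)
qed

lemma integral_min_sq_dist_regrid_gap:
  assumes "finite S" "a < b" "a \<in> S" "b \<in> S"
  shows "integral {a..b} (min_sq_dist (regrid S a b p)) \<le> (b - a)^3 / (12 * (real p + 1)^2)"
proof -
  define d where "d = (b - a) / (real p + 1)"
  have "insert a (insert b (equispaced_interior a b p)) \<subseteq> regrid S a b p"
    using assms by (auto simp: regrid_def)
  then have "a + real r * d \<in> regrid S a b p" if "r \<le> p + 1" for r
    using equispaced_point_mem[OF that, of a b] unfolding d_def by blast
  then have "integral {a..a + real (p + 1) * d} (min_sq_dist (regrid S a b p))
      \<le> real (p + 1) * d^3 / 12"
    using assms by (intro integral_min_sq_dist_equispaced_upper finite_regrid) (auto simp: d_def)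
  moreover have "a + real (p + 1) * d = b" by (simp add: d_def field_simps)
  moreover have "real (p + 1) * d^3 / 12 = (b - a)^3 / (12 * (real p + 1)^2)"
  proof -
    have "q * (L / q)^3 / 12 = L^3 / (12 * q^2)" if "q > 0" for q L :: real
      using that by (simp add: power_divide power2_eq_square power3_eq_cube)
    from this[of "real p + 1" "b - a"] show ?thesis by (simp add: d_def add.commute)
  qed
  ultimately show ?thesis by simp
qed

lemma integral_min_sq_dist_regrid:
  assumes "finite S" "a < b" "a \<in> S" "b \<in> S" "c \<le> a" "b \<le> d"
  shows "integral {c..d} (min_sq_dist (regrid S a b p))
    \<le> integral {c..d} (min_sq_dist S) - (b - a)^3 / (12 * (real (card (S \<inter> {a<..<b})) + 1)^2)
        + (b - a)^3 / (12 * (real p + 1)^2)"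
proof -
  let ?S' = "regrid S a b p"
  have S': "finite ?S'" "a \<in> ?S'" "b \<in> ?S'" "?S' \<noteq> {}"
    using assms by (auto simp: regrid_def finite_regrid)
  have "integral {c..d} (min_sq_dist ?S') - integral {a..b} (min_sq_dist ?S')
      = integral {c..d} (min_sq_dist S) - integral {a..b} (min_sq_dist S)"
  proof (rule integral_eq_outside_subinterval)
    fix x assume "x \<notin> {a<..<b}"
    then show "min_sq_dist ?S' x = min_sq_dist S x"
      using min_sq_dist_remove_gap[OF S'(1-3)] min_sq_dist_remove_gap[OF assms(1,3,4)]
        regrid_Diff_gap[OF assms(2)] by metis
  qed (use assms S' in \<open>auto intro: integrable_min_sq_dist\<close>)
  then show ?thesis
    using integral_min_sq_dist_lower[OF assms(1) _ assms(3,4)] assms(2)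
      integral_min_sq_dist_regrid_gap[OF assms(1-4), of p] by simp
qed

lemma inverse_square_decrement_strict_decreasing:
  fixes x y :: real
  assumes "0 < x" "x < y"
  shows "1 / y^2 - 1 / (y + 1)^2 < 1 / x^2 - 1 / (x + 1)^2"
proof -
  have decrement: "1 / z^2 - 1 / (z + 1)^2 = (2 * z + 1) / (z^2 * (z + 1)^2)"
    if "z > 0" for z :: real
    using that by (simp add: divide_simps) (simp add: algebra_simps power2_eq_square)
  have "(2 * y + 1) * x \<le> (2 * x + 1) * y" using assms by (simp add: algebra_simps)
  moreover have "x * (x + 1)^2 < y * (y + 1)^2"
    using assms by (intro mult_strict_mono power_strict_mono) auto
  ultimately have "(2 * y + 1) * x * (x * (x + 1)^2) < (2 * x + 1) * y * (y * (y + 1)^2)"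
    by (rule mult_le_less_imp_less) (use assms in auto)
  then have "(2 * y + 1) * (x^2 * (x + 1)^2) < (2 * x + 1) * (y^2 * (y + 1)^2)"
    by (simp add: power2_eq_square ac_simps)
  then have "(2 * y + 1) / (y^2 * (y + 1)^2) < (2 * x + 1) / (x^2 * (x + 1)^2)"
    using assms by (simp add: frac_less_eq field_simps)
  then show ?thesis using decrement assms by simp
qed

lemma integral_min_sq_dist_rebalance:
  assumes "finite S" "c \<le> a1" "a1 < b1" "b1 \<le> d" "c \<le> a2" "a2 < b2" "b2 \<le> d"
    and "b1 - a1 = b2 - a2" "b1 \<le> a2 \<or> b2 \<le> a1" "{a1, b1} \<subseteq> S" "{a2, b2} \<subseteq> S"
    and "card (S \<inter> {a2<..<b2}) + 2 \<le> card (S \<inter> {a1<..<b1})"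
  obtains S' where "finite S'" "card S' = card S" "S - {a1<..<b1} - {a2<..<b2} \<subseteq> S'"
    "integral {c..d} (min_sq_dist S') < integral {c..d} (min_sq_dist S)"
proof -
  define m1 where "m1 = card (S \<inter> {a1<..<b1})"
  define m2 where "m2 = card (S \<inter> {a2<..<b2})"
  define E where "E m = (b1 - a1)^3 / (12 * (real m + 1)^2)" for m :: nat
  define S1 where "S1 = regrid S a1 b1 (m1 - 1)"
  define S2 where "S2 = regrid S1 a2 b2 (m2 + 1)"
  have S1_outside: "S1 - {a1<..<b1} = S - {a1<..<b1}"
    unfolding S1_def using assms(3) by (rule regrid_Diff_gap)
  have gaps: "{a1<..<b1} \<inter> {a2..b2} = {}" using assms(3,6,9) by auto
  have "S1 \<inter> {a2<..<b2} = (S1 - {a1<..<b1}) \<inter> {a2<..<b2}" using gaps by auto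
  also have "\<dots> = S \<inter> {a2<..<b2}" unfolding S1_outside using gaps by auto
  finally have S1_gap2: "S1 \<inter> {a2<..<b2} = S \<inter> {a2<..<b2}" .
  have "a2 \<in> S1 - {a1<..<b1}" "b2 \<in> S1 - {a1<..<b1}"
    unfolding S1_outside using gaps assms(6,11) by (auto simp: disjoint_iff)
  then have endpoints2: "a2 \<in> S1" "b2 \<in> S1" by auto
  have fin1: "finite S1" unfolding S1_def using assms(1) by (rule finite_regrid)
  have "m1 \<le> card S" unfolding m1_def using assms(1) by (intro card_mono) auto
  then have card1: "card S1 + 1 = card S"
    using card_regrid[OF assms(1,3)] assms(12) unfolding S1_def m1_def m2_def by simp
  have "S - {a1<..<b1} - {a2<..<b2} \<subseteq> S2 - {a2<..<b2}"
    using S1_outside regrid_Diff_gap[OF assms(6), of S1] unfolding S2_def by auto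
  moreover have "m2 \<le> card S1"
    unfolding m2_def S1_gap2[symmetric] using fin1 by (intro card_mono) auto
  then have "card S2 = card S"
    using card_regrid[OF fin1 assms(6)] S1_gap2 card1 unfolding S2_def m2_def by simp
  moreover have "integral {c..d} (min_sq_dist S2) < integral {c..d} (min_sq_dist S)"
  proof -
    have "integral {c..d} (min_sq_dist S2) \<le> integral {c..d} (min_sq_dist S1) - E m2 + E (m2 + 1)"
      using integral_min_sq_dist_regrid[OF fin1 assms(6) endpoints2 assms(5,7), of "m2 + 1"]
        S1_gap2 assms(8)
      unfolding S2_def E_def m2_def by simp
    also have "\<dots> \<le> integral {c..d} (min_sq_dist S) - E m1 + E (m1 - 1) - E m2 + E (m2 + 1)"
      using integral_min_sq_dist_regrid[OF assms(1,3) _ _ assms(2,4), of "m1 - 1"] assms(10)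
      unfolding S1_def E_def m1_def by simp
    also have "\<dots> < integral {c..d} (min_sq_dist S)"
    proof -
      have "1 / (real m1)^2 - 1 / (real m1 + 1)^2 < 1 / (real m2 + 1)^2 - 1 / (real m2 + 1 + 1)^2"
        using assms(12) unfolding m1_def m2_def
        by (intro inverse_square_decrement_strict_decreasing) auto
      then have "(b1 - a1)^3 / 12 * (1 / (real m1)^2 - 1 / (real m1 + 1)^2)
          < (b1 - a1)^3 / 12 * (1 / (real m2 + 1)^2 - 1 / (real m2 + 1 + 1)^2)"
        using assms(3) by (intro mult_strict_left_mono) auto
      moreover have "real (m1 - 1) + 1 = real m1" using assms(12) unfolding m1_def m2_def by auto
      ultimately show ?thesis unfolding E_def by (simp add: field_simps add.assoc)
    qed
    finally show ?thesis .
  qed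
  ultimately show ?thesis using that[of S2] finite_regrid[OF fin1] unfolding S2_def by blast
qed

lemma cond_optimal_setD:
  assumes "cond_optimal_set P \<beta> n \<gamma>"
  shows "finite \<gamma>" "\<beta> \<subseteq> \<gamma>"
  using assms unfolding cond_optimal_set_def by auto

lemma cond_optimal_set_distortion_le:
  assumes opt: "cond_optimal_set P \<beta> n \<gamma>" and "\<beta> \<noteq> {}" "finite S" "\<beta> \<subseteq> S" "card S \<le> card \<gamma>"
  shows "distortion P \<gamma> \<le> distortion P S"
proof -
  obtain \<alpha> where fin: "finite \<beta>" "finite \<alpha>" and card_\<alpha>: "card \<alpha> \<le> n - card \<beta>"
    and \<gamma>: "\<gamma> = \<alpha> \<union> \<beta>" and opt_value: "distortion P \<gamma> = cond_quant_error P \<beta> n"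
    using opt unfolding cond_optimal_set_def by blast
  let ?V = "{distortion P (\<alpha> \<union> \<beta>) | \<alpha>. finite \<alpha> \<and> card \<alpha> \<le> n - card \<beta>}"
  have "card (S - \<beta>) = card S - card \<beta>"
    using assms(3,4) by (simp add: card_Diff_subset finite_subset)
  also have "\<dots> \<le> card \<alpha>"
    using assms(5) card_Un_le[of \<alpha> \<beta>] unfolding \<gamma> by linarith
  finally have "distortion P ((S - \<beta>) \<union> \<beta>) \<in> ?V"
    by (intro CollectI exI[of _ "S - \<beta>"]) (use card_\<alpha> assms(3) in auto)
  moreover have "(S - \<beta>) \<union> \<beta> = S" using assms(4) by auto
  ultimately have "distortion P S \<in> ?V" by simp
  moreover have "bdd_below ?V"
    using fin(1) assms(2) by (auto intro!: bdd_belowI[of _ 0] distortion_nonneg)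
  ultimately show ?thesis
    unfolding opt_value cond_quant_error_def by (rule cInf_lower)
qed

lemma cond_optimal_set_uniform_balanced:
  assumes opt: "cond_optimal_set (uniform_measure lborel {c..d}) \<beta> n \<gamma>"
    and "c \<le> a1" "a1 < b1" "b1 \<le> d" "c \<le> a2" "a2 < b2" "b2 \<le> d"
    and "b1 - a1 = b2 - a2" "b1 \<le> a2 \<or> b2 \<le> a1" "{a1, b1} \<subseteq> \<beta>" "{a2, b2} \<subseteq> \<beta>"
    and "\<beta> \<inter> {a1<..<b1} = {}" "\<beta> \<inter> {a2<..<b2} = {}"
  shows "card (\<gamma> \<inter> {a1<..<b1}) \<le> card (\<gamma> \<inter> {a2<..<b2}) + 1"
proof (rule ccontr)
  let ?P = "uniform_measure lborel {c..d}"
  assume "\<not> ?thesis"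
  then have crowded: "card (\<gamma> \<inter> {a2<..<b2}) + 2 \<le> card (\<gamma> \<inter> {a1<..<b1})" by simp
  have \<gamma>: "finite \<gamma>" "\<beta> \<subseteq> \<gamma>" "\<beta> \<noteq> {}" using cond_optimal_setD[OF opt] assms(10) by auto
  obtain S' where S': "finite S'" "card S' = card \<gamma>" "\<gamma> - {a1<..<b1} - {a2<..<b2} \<subseteq> S'"
    and smaller: "integral {c..d} (min_sq_dist S') < integral {c..d} (min_sq_dist \<gamma>)"
    using integral_min_sq_dist_rebalance[OF \<gamma>(1) assms(2-9) _ _ crowded] \<gamma>(2) assms(10,11) by blast
  have "\<beta> \<subseteq> S'" using \<gamma>(2) S'(3) assms(12,13) by blast
  then have "S' \<noteq> {}" "\<gamma> \<noteq> {}" using \<gamma>(2,3) by blast+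
  then have "distortion ?P S' < distortion ?P \<gamma>"
    using smaller S'(1) \<gamma> assms(2-4)
    by (simp add: distortion_uniform_measure divide_strict_right_mono)
  moreover have "distortion ?P \<gamma> \<le> distortion ?P S'"
    using cond_optimal_set_distortion_le[OF opt] \<gamma>(3) S'(1,2) \<open>\<beta> \<subseteq> S'\<close> by simp
  ultimately show False by simp
qed

lemma card_Int_atLeastAtMost:
  fixes S :: "'a :: linorder set"
  assumes "finite S" "a < b" "a \<in> S" "b \<in> S"
  shows "card (S \<inter> {a..b}) = card (S \<inter> {a<..<b}) + 2"
proof -
  have "S \<inter> {a..b} = insert a (insert b (S \<inter> {a<..<b}))"
    using assms by (auto simp: less_le)
  then show ?thesis using assms by simp
qed

lemma of_nat_divide_not_in_cell:
  assumes "0 < k"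
  shows "real q / real k \<notin> {(real l - 1) / real k <..< real l / real k}"
proof
  assume "real q / real k \<in> {(real l - 1) / real k <..< real l / real k}"
  then have "real l < real (Suc q)" "real q < real l" using assms by (auto simp: divide_less_cancel)
  then show False by simp
qed

lemma uniform_partition_cell:
  assumes "2 \<le> l" "l \<le> k"
  defines "\<beta> \<equiv> {real j / real k | j. 1 \<le> j \<and> j \<le> k}"
  shows "0 \<le> (real l - 1) / real k" "(real l - 1) / real k < real l / real k" "real l / real k \<le> 1"
    and "real l / real k - (real l - 1) / real k = 1 / real k"
    and "{(real l - 1) / real k, real l / real k} \<subseteq> \<beta>"
    and "\<beta> \<inter> {(real l - 1) / real k <..< real l / real k} = {}"
proof -
  have k: "0 < k" using assms by linarith
  show "0 \<le> (real l - 1) / real k" "real l / real k \<le> 1" using assms by auto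
  show "(real l - 1) / real k < real l / real k" using k by (simp add: divide_strict_right_mono)
  show "real l / real k - (real l - 1) / real k = 1 / real k" by (simp add: diff_divide_distrib)
  have "(real l - 1) / real k \<in> \<beta>"
    unfolding \<beta>_def using assms by (intro CollectI exI[of _ "l - 1"]) (auto simp: of_nat_diff)
  moreover have "real l / real k \<in> \<beta>"
    unfolding \<beta>_def using assms by (intro CollectI exI[of _ l]) auto
  ultimately show "{(real l - 1) / real k, real l / real k} \<subseteq> \<beta>" by simp
  show "\<beta> \<inter> {(real l - 1) / real k <..< real l / real k} = {}"
    unfolding \<beta>_def using of_nat_divide_not_in_cell[OF k] by blast
qed

theorem lemma4p2:
  fixes k n :: nat and \<alpha>n :: "real set"
  assumes "n \<ge> k"
    and "cond_optimal_set (uniform_measure lborel {0..1}) {real j / real k | j. 1 \<le> j \<and> j \<le> k} n \<alpha>n"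
    and "2 \<le> i" and "i < j" and "j \<le> k"
  shows "\<bar>int (card (\<alpha>n \<inter> {(real i - 1) / real k .. real i / real k}))
          - int (card (\<alpha>n \<inter> {(real j - 1) / real k .. real j / real k}))\<bar> \<in> {0, 1}"
proof -
  let ?a = "\<lambda>l. (real l - 1) / real k" and ?b = "\<lambda>l. real l / real k"
  have "i \<le> k" "2 \<le> j" using assms by auto
  note cell_i = uniform_partition_cell[OF assms(3) \<open>i \<le> k\<close>]
  note cell_j = uniform_partition_cell[OF \<open>2 \<le> j\<close> assms(5)]
  have "?b i \<le> ?a j" using assms(4) by (simp add: divide_right_mono)
  have "card (\<alpha>n \<inter> {?a i<..<?b i}) \<le> card (\<alpha>n \<inter> {?a j<..<?b j}) + 1"
    by (rule cond_optimal_set_uniform_balanced[OF assms(2) cell_i(1-3) cell_j(1-3) _ _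
          cell_i(5) cell_j(5) cell_i(6) cell_j(6)]) (use cell_i(4) cell_j(4) \<open>?b i \<le> ?a j\<close> in auto)
  moreover have "card (\<alpha>n \<inter> {?a j<..<?b j}) \<le> card (\<alpha>n \<inter> {?a i<..<?b i}) + 1"
    by (rule cond_optimal_set_uniform_balanced[OF assms(2) cell_j(1-3) cell_i(1-3) _ _
          cell_j(5) cell_i(5) cell_j(6) cell_i(6)]) (use cell_i(4) cell_j(4) \<open>?b i \<le> ?a j\<close> in auto)
  moreover have "card (\<alpha>n \<inter> {?a l..?b l}) = card (\<alpha>n \<inter> {?a l<..<?b l}) + 2" if "2 \<le> l" "l \<le> k" for l
    using cond_optimal_setD[OF assms(2)] uniform_partition_cell[OF that]
    by (intro card_Int_atLeastAtMost) auto
  ultimately show ?thesis using assms by auto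
qed

end
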